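(* Let $(G,* )$ be a topological group with the Hurewicz property. Then $G$ has ${\sf S}_c(\mathcal{O}_{\sf nbd},\mathcal{O})$ if and only if $G$ has ${\sf S}_c(\mathcal{O},\mathcal{O})$.
   Context: For a topological group $(G,* )$ with identity $e$ and a neighborhood $U$ of $e$, let $\mathcal{O}(U)=\{x*U: x\in G\}$ and $\mathcal{O}_{\sf nbd}=\{\mathcal{O}(U): U \text{ a neighborhood of } e\}$. $\mathcal{O}$ denotes the collection of all open covers of $G$. A family $\mathcal{B}$ refines $\mathcal{A}$ if every member of $\mathcal{B}$ is contained in some member of $\mathcal{A}$. ${\sf S}_c(\mathcal{A},\mathcal{B})$: for each sequence $(A_n:n<\infty)$ of elements of $\mathcal{A}$ there is a sequence $(B_n:n<\infty)$ such that each $B_n$ is a pairwise disjoint family of open sets refining $A_n$ and $\bigcup_{n}B_n\in\mathcal{B}$. A space $X$ has the Hurewicz property if for each sequence $(\mathcal{U}_n:n<\infty)$ of open covers of $X$ there are finite $\mathcal{F}_n\subseteq\mathcal{U}_n$ such that for each $x\in X$ the set $\{n: x\notin\bigcup\mathcal{F}_n\}$ is finite. *)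

theory Defs
  imports "HOL-Analysis.Analysis"
begin

text \<open>Topological groups are modelled by the type class topological_group_add
(group operation written additively: x * U becomes (\<lambda>u. x + u) ` U, identity 0).\<close>

definition open_covers :: "'a::topological_space set set set" where
  "open_covers = {C. (\<forall>V\<in>C. open V) \<and> \<Union>C = UNIV}"

definition is_nbd_of :: "'a::topological_space set \<Rightarrow> 'a \<Rightarrow> bool" where
  "is_nbd_of U e \<longleftrightarrow> (\<exists>V. open V \<and> e \<in> V \<and> V \<subseteq> U)"

definition translates :: "'a::group_add set \<Rightarrow> 'a set set" where
  "translates U = {(\<lambda>u. x + u) ` U | x. True}"

definition nbd_covers :: "'a::topological_group_add set set set" where
  "nbd_covers = {translates U | U. is_nbd_of U 0}"

definition refines :: "'a set set \<Rightarrow> 'a set set \<Rightarrow> bool" where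
  "refines B A \<longleftrightarrow> (\<forall>V\<in>B. \<exists>W\<in>A. V \<subseteq> W)"

definition S_c :: "'a::topological_space set set set \<Rightarrow> 'a set set set \<Rightarrow> bool" where
  "S_c \<A> \<B> \<longleftrightarrow> (\<forall>A :: nat \<Rightarrow> 'a set set. (\<forall>n. A n \<in> \<A>) \<longrightarrow>
     (\<exists>B :: nat \<Rightarrow> 'a set set.
        (\<forall>n. (\<forall>V\<in>B n. open V) \<and> pairwise disjnt (B n) \<and> refines (B n) (A n))
        \<and> (\<Union>n. B n) \<in> \<B>))"

definition hurewicz :: "'a::topological_space itself \<Rightarrow> bool" where
  "hurewicz _ \<longleftrightarrow> (\<forall>U :: nat \<Rightarrow> 'a set set. (\<forall>n. U n \<in> open_covers) \<longrightarrow>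
     (\<exists>F :: nat \<Rightarrow> 'a set set. (\<forall>n. finite (F n) \<and> F n \<subseteq> U n) \<and>
        (\<forall>x. finite {n. x \<notin> \<Union>(F n)})))"

end

theory Submission
  imports Defs
begin

(* Backward direction: every cover by translates of a neighbourhood U of 0 is
   refined by the open cover by translates of the interior of U, and S_c is
   antitone in its first argument with respect to refinement.

   Forward direction: given open covers A_n, pick for every point x a member
   W of A_n containing x and an open neighbourhood V of 0 so small that every
   translate of V meeting x + V lies inside W.  The Hurewicz property applied
   to the covers {x + V : x in G} yields finitely many such translates per n,
   with union K_n, and every point lies in K_n for almost all n.  The
   intersection U_n of the finitely many V's is one neighbourhood of 0 such
   that every translate of U_n meeting K_n lies in a member of A_n.  Applying
   S_c(O_nbd, O) along infinitely many disjoint infinite subsequences of the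
   covers {y + U_n} produces disjoint refinements covering every point for
   infinitely many n; keeping only the members that meet K_n gives the
   required selection for (A_n). *)

lemma open_translate:
  fixes S :: "'a::topological_group_add set"
  assumes "open S"
  shows "open ((+) x ` S)"
proof -
  have "(+) x ` S = (+) (- x) -` S"
    by (force simp: add.assoc[symmetric])
  moreover have "continuous_on UNIV ((+) (- x))"
    by (intro continuous_intros)
  ultimately show ?thesis
    using assms by (metis open_vimage)
qed

lemma translate_family_open_cover:
  fixes V :: "'a::topological_group_add \<Rightarrow> 'a set"
  assumes "\<And>x. open (V x)" "\<And>x. 0 \<in> V x"
  shows "range (\<lambda>x. (+) x ` V x) \<in> open_covers"
proof -
  have "y \<in> \<Union>(range (\<lambda>x. (+) x ` V x))" for y
  proof -
    have "y \<in> (+) y ` V y"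
      using assms(2) by (auto intro: image_eqI[of _ _ 0])
    then show ?thesis
      by blast
  qed
  moreover have "\<forall>S\<in>range (\<lambda>x. (+) x ` V x). open S"
    using assms(1) by (auto intro: open_translate)
  ultimately show ?thesis
    unfolding open_covers_def by blast
qed

lemma translates_open_cover:
  fixes U :: "'a::topological_group_add set"
  assumes "open U" "0 \<in> U"
  shows "translates U \<in> open_covers"
proof -
  have "translates U = range (\<lambda>x. (+) x ` U)"
    unfolding translates_def by blast
  then show ?thesis
    using translate_family_open_cover[of "\<lambda>_. U"] assms by simp
qed

text \<open>Inside an open set W around x there is a neighbourhood V of 0 such that
  every translate of V meeting x + V stays inside W.  This is continuity of
  (a, b, c) \<mapsto> x + a - b + c at the origin.\<close>

lemma small_translates_inside:
  fixes x :: "'a::topological_group_add"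
  assumes "open W" "x \<in> W"
  shows "\<exists>V. open V \<and> 0 \<in> V \<and>
           (\<forall>y. (+) y ` V \<inter> (+) x ` V \<noteq> {} \<longrightarrow> (+) y ` V \<subseteq> W)"
proof -
  define f where "f = (\<lambda>p::'a \<times> 'a \<times> 'a. x + fst p - fst (snd p) + snd (snd p))"
  have "continuous_on UNIV f"
    unfolding f_def by (intro continuous_intros)
  then have "open (f -` W)"
    using assms(1) by (metis open_vimage)
  moreover have "(0, 0, 0) \<in> f -` W"
    using assms(2) by (simp add: f_def)
  ultimately obtain A BC where A: "open A" "open BC" "(0, 0, 0) \<in> A \<times> BC" "A \<times> BC \<subseteq> f -` W"
    using open_prod_elim by metis
  then obtain B C where BC: "open B" "open C" "(0, 0) \<in> B \<times> C" "B \<times> C \<subseteq> BC"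
    using open_prod_elim[OF A(2)] by (metis mem_Sigma_iff order_refl)
  define V where "V = A \<inter> B \<inter> C"
  have triple: "x + a - b + c \<in> W" if "a \<in> V" "b \<in> V" "c \<in> V" for a b c
  proof -
    have "(a, b, c) \<in> A \<times> BC"
      using that BC(4) by (auto simp: V_def)
    then show ?thesis
      using A(4) by (auto simp: f_def)
  qed
  have "(+) y ` V \<subseteq> W" if "(+) y ` V \<inter> (+) x ` V \<noteq> {}" for y
  proof
    fix t assume "t \<in> (+) y ` V"
    then obtain c where c: "c \<in> V" "t = y + c" by blast
    from that obtain a b where ab: "a \<in> V" "b \<in> V" "y + b = x + a" by blast
    then have "y = x + a - b"
      by (metis add_diff_cancel)
    then show "t \<in> W"
      using triple[OF ab(1,2) c(1)] c(2) by simp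
  qed
  moreover have "open V" "0 \<in> V"
    using A BC by (auto simp: V_def)
  ultimately show ?thesis by blast
qed

lemma small_translates_for_cover:
  fixes \<C> :: "'a::topological_group_add set set"
  assumes "\<C> \<in> open_covers"
  shows "\<exists>V W. \<forall>x. W x \<in> \<C> \<and> open (V x) \<and> 0 \<in> V x \<and>
           (\<forall>y. (+) y ` V x \<inter> (+) x ` V x \<noteq> {} \<longrightarrow> (+) y ` V x \<subseteq> W x)"
proof -
  have "\<exists>V W. W \<in> \<C> \<and> open V \<and> 0 \<in> V \<and>
          (\<forall>y. (+) y ` V \<inter> (+) x ` V \<noteq> {} \<longrightarrow> (+) y ` V \<subseteq> W)" for x
  proof -
    have "x \<in> \<Union>\<C>"
      using assms by (simp add: open_covers_def)
    then obtain W where W: "W \<in> \<C>" "x \<in> W"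
      by blast
    then have "open W"
      using assms by (simp add: open_covers_def)
    then obtain V where "open V \<and> 0 \<in> V \<and>
        (\<forall>y. (+) y ` V \<inter> (+) x ` V \<noteq> {} \<longrightarrow> (+) y ` V \<subseteq> W)"
      using small_translates_inside[OF \<open>open W\<close> W(2)] by blast
    then show ?thesis
      using W(1) by blast
  qed
  then show ?thesis
    by metis
qed

text \<open>This is where finiteness (from Hurewicz) is used.\<close>

lemma uniform_nbd_of_finite_family:
  fixes V W :: "'a::topological_group_add \<Rightarrow> 'a set"
  assumes "finite X"
    and V: "\<And>x. x \<in> X \<Longrightarrow> open (V x) \<and> 0 \<in> V x \<and>
              (\<forall>y. (+) y ` V x \<inter> (+) x ` V x \<noteq> {} \<longrightarrow> (+) y ` V x \<subseteq> W x)"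
  defines "U \<equiv> \<Inter>x\<in>X. V x"
  shows "open U" "0 \<in> U"
    and "(+) y ` U \<inter> (\<Union>x\<in>X. (+) x ` V x) \<noteq> {} \<Longrightarrow> \<exists>x\<in>X. (+) y ` U \<subseteq> W x"
proof -
  show "open U" "0 \<in> U"
    unfolding U_def using assms(1) V by auto
  assume "(+) y ` U \<inter> (\<Union>x\<in>X. (+) x ` V x) \<noteq> {}"
  then obtain x where x: "x \<in> X" "(+) y ` U \<inter> (+) x ` V x \<noteq> {}" by blast
  have "U \<subseteq> V x"
    unfolding U_def using x(1) by blast
  then have "(+) y ` V x \<inter> (+) x ` V x \<noteq> {}"
    using x(2) by blast
  then have "(+) y ` V x \<subseteq> W x"
    using V[OF x(1)] by blast
  then show "\<exists>x\<in>X. (+) y ` U \<subseteq> W x"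
    using x(1) \<open>U \<subseteq> V x\<close> by blast
qed

lemma hurewicz_uniform_nbds:
  fixes A :: "nat \<Rightarrow> 'a::topological_group_add set set"
  assumes hur: "hurewicz TYPE('a)" and A: "\<And>n. A n \<in> open_covers"
  shows "\<exists>U K. (\<forall>n. open (U n) \<and> 0 \<in> U n \<and>
                  (\<forall>y. (+) y ` U n \<inter> K n \<noteq> {} \<longrightarrow> (\<exists>W\<in>A n. (+) y ` U n \<subseteq> W)))
              \<and> (\<forall>y. finite {n. y \<notin> K n})"
proof -
  have "\<exists>V W. \<forall>x. W x \<in> A n \<and> open (V x) \<and> 0 \<in> V x \<and>
          (\<forall>y. (+) y ` V x \<inter> (+) x ` V x \<noteq> {} \<longrightarrow> (+) y ` V x \<subseteq> W x)" for n
    by (rule small_translates_for_cover[OF A])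
  then obtain V W :: "nat \<Rightarrow> 'a \<Rightarrow> 'a set" where VW:
      "\<And>n x. open (V n x) \<and> 0 \<in> V n x \<and>
          (\<forall>y. (+) y ` V n x \<inter> (+) x ` V n x \<noteq> {} \<longrightarrow> (+) y ` V n x \<subseteq> W n x)"
      "\<And>n x. W n x \<in> A n"
    by metis
  define cov :: "nat \<Rightarrow> 'a set set" where "cov n = range (\<lambda>x. (+) x ` V n x)" for n
  have "cov n \<in> open_covers" for n
    unfolding cov_def using VW(1) by (simp add: translate_family_open_cover)
  then obtain F where F: "\<And>n. finite (F n) \<and> F n \<subseteq> cov n" "\<And>y. finite {n. y \<notin> \<Union>(F n)}"
    using hur[unfolded hurewicz_def, rule_format, of cov] by blast
  have "\<exists>X. finite X \<and> F n = (\<lambda>x. (+) x ` V n x) ` X" for n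
  proof -
    have "F n \<subseteq> (\<lambda>x. (+) x ` V n x) ` UNIV"
      using F(1)[of n] unfolding cov_def by blast
    moreover have "finite (F n)"
      using F(1) by blast
    ultimately obtain C where "finite C" "F n = (\<lambda>x. (+) x ` V n x) ` C"
      using finite_subset_image[of "F n"] by metis
    then show ?thesis
      by blast
  qed
  then obtain X where X: "\<And>n. finite (X n)" "\<And>n. F n = (\<lambda>x. (+) x ` V n x) ` X n"
    by metis
  define U where "U n = (\<Inter>x\<in>X n. V n x)" for n
  define K where "K n = (\<Union>x\<in>X n. (+) x ` V n x)" for n
  have "open (U n) \<and> 0 \<in> U n \<and>
          (\<forall>y. (+) y ` U n \<inter> K n \<noteq> {} \<longrightarrow> (\<exists>W\<in>A n. (+) y ` U n \<subseteq> W))" for n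
  proof -
    note family = uniform_nbd_of_finite_family[of "X n" "V n" "W n", OF X(1) VW(1), folded U_def K_def]
    show ?thesis
      using family VW(2) by blast
  qed
  moreover have "K n = \<Union>(F n)" for n
    unfolding K_def X(2) by blast
  ultimately show ?thesis
    using F(2) by metis
qed

lemma refines_trans: "refines C B \<Longrightarrow> refines B A \<Longrightarrow> refines C A"
  unfolding refines_def by (meson order_trans)

lemma S_c_refinement_mono:
  assumes S: "S_c \<A> \<B>" and ref: "\<And>C. C \<in> \<A>' \<Longrightarrow> \<exists>A\<in>\<A>. refines A C"
  shows "S_c \<A>' \<B>"
  unfolding S_c_def
proof (intro allI impI)
  fix C :: "nat \<Rightarrow> 'a set set"
  assume "\<forall>n. C n \<in> \<A>'"
  then have "\<exists>A\<in>\<A>. refines A (C n)" for n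
    using ref by blast
  then obtain A where A: "\<And>n. A n \<in> \<A>" "\<And>n. refines (A n) (C n)"
    by metis
  then obtain B where B: "\<forall>n. (\<forall>V\<in>B n. open V) \<and> pairwise disjnt (B n) \<and> refines (B n) (A n)"
      "(\<Union>n. B n) \<in> \<B>"
    using S unfolding S_c_def by meson
  then show "\<exists>B. (\<forall>n. (\<forall>V\<in>B n. open V) \<and> pairwise disjnt (B n) \<and> refines (B n) (C n))
               \<and> (\<Union>n. B n) \<in> \<B>"
    using A(2) refines_trans by blast
qed

lemma nbd_cover_refined_by_open_cover:
  assumes "C \<in> (nbd_covers :: 'a::topological_group_add set set set)"
  shows "\<exists>A\<in>open_covers. refines A C"
proof -
  obtain U where C: "C = translates U" and "is_nbd_of U 0"
    using assms unfolding nbd_covers_def by blast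
  then have "0 \<in> interior U"
    unfolding is_nbd_of_def by (meson interior_maximal subsetD)
  then have "translates (interior U) \<in> open_covers"
    by (simp add: translates_open_cover)
  moreover have "refines (translates (interior U)) C"
    unfolding C refines_def translates_def using interior_subset by blast
  ultimately show ?thesis by blast
qed

text \<open>Splitting the index set into infinitely many infinite pieces, S_c(\<A>, O)
  yields selections in which every point is covered for infinitely many n.\<close>

lemma S_c_cover_infinitely_often:
  fixes A :: "nat \<Rightarrow> 'a::topological_space set set"
  assumes S: "S_c \<A> open_covers" and A: "\<And>n. A n \<in> \<A>"
  shows "\<exists>B. (\<forall>n. (\<forall>V\<in>B n. open V) \<and> pairwise disjnt (B n) \<and> refines (B n) (A n))
            \<and> (\<forall>y. infinite {n. y \<in> \<Union>(B n)})"
proof -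
  have "\<exists>B. (\<forall>j. (\<forall>V\<in>B j. open V) \<and> pairwise disjnt (B j) \<and> refines (B j) (A (prod_encode (m, j))))
           \<and> (\<Union>j. B j) \<in> open_covers" for m
    using S[unfolded S_c_def, rule_format, of "\<lambda>j. A (prod_encode (m, j))"] A by blast
  then obtain Bm where Bm: "\<And>m j. (\<forall>V\<in>Bm m j. open V) \<and> pairwise disjnt (Bm m j)
                                   \<and> refines (Bm m j) (A (prod_encode (m, j)))"
      "\<And>m. (\<Union>j. Bm m j) \<in> open_covers"
    by metis
  define B where "B n = Bm (fst (prod_decode n)) (snd (prod_decode n))" for n
  have "infinite {n. y \<in> \<Union>(B n)}" for y
  proof -
    have "\<exists>j. y \<in> \<Union>(Bm m j)" for m
    proof -
      have "y \<in> \<Union>(\<Union>j. Bm m j)"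
        using Bm(2)[of m] by (simp add: open_covers_def)
      then show ?thesis
        by blast
    qed
    then obtain jj where jj: "\<And>m. y \<in> \<Union>(Bm m (jj m))"
      by metis
    define g where "g m = prod_encode (m, jj m)" for m
    have "inj g"
      unfolding g_def by (rule injI) (metis inj_prod_encode injD prod.inject)
    moreover have "range g \<subseteq> {n. y \<in> \<Union>(B n)}"
      using jj by (auto simp: g_def B_def)
    ultimately show ?thesis
      using range_inj_infinite infinite_super by blast
  qed
  moreover have "(\<forall>V\<in>B n. open V) \<and> pairwise disjnt (B n) \<and> refines (B n) (A n)" for n
    using Bm(1)[of "fst (prod_decode n)" "snd (prod_decode n)"] by (simp add: B_def)
  ultimately show ?thesis by blast
qed

lemma S_c_open_implies_S_c_nbd:
  assumes "S_c (open_covers :: 'a::topological_group_add set set set) open_covers"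
  shows "S_c (nbd_covers :: 'a set set set) open_covers"
  using S_c_refinement_mono[OF assms] nbd_cover_refined_by_open_cover by blast

text \<open>The forward direction: keep from a selection for the neighbourhood covers
  only the members meeting K n; those refine A n and still cover every point.\<close>

lemma S_c_nbd_implies_S_c_open:
  assumes hur: "hurewicz TYPE('a::topological_group_add)"
    and S: "S_c (nbd_covers :: 'a set set set) open_covers"
  shows "S_c (open_covers :: 'a set set set) open_covers"
  unfolding S_c_def
proof (intro allI impI)
  fix A :: "nat \<Rightarrow> 'a set set"
  assume "\<forall>n. A n \<in> open_covers"
  then obtain U K where UK: "\<And>n. open (U n) \<and> 0 \<in> U n \<and>
        (\<forall>y. (+) y ` U n \<inter> K n \<noteq> {} \<longrightarrow> (\<exists>W\<in>A n. (+) y ` U n \<subseteq> W))"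
      and K: "\<And>y. finite {n. y \<notin> K n}"
    using hurewicz_uniform_nbds[OF hur] by metis
  have "translates (U n) \<in> nbd_covers" for n
    using UK unfolding nbd_covers_def is_nbd_of_def by blast
  then obtain B where B: "\<And>n. (\<forall>V\<in>B n. open V) \<and> pairwise disjnt (B n)
                                 \<and> refines (B n) (translates (U n))"
      and inf: "\<And>y. infinite {n. y \<in> \<Union>(B n)}"
    using S_c_cover_infinitely_often[OF S, of "\<lambda>n. translates (U n)"] by blast
  define B' where "B' n = {S \<in> B n. S \<inter> K n \<noteq> {}}" for n
  have "refines (B' n) (A n)" for n
    unfolding refines_def
  proof
    fix S assume "S \<in> B' n"
    then have S: "S \<in> B n" "S \<inter> K n \<noteq> {}"
      unfolding B'_def by auto
    then obtain y where y: "S \<subseteq> (+) y ` U n"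
      using B[of n] unfolding refines_def translates_def by blast
    then have "(+) y ` U n \<inter> K n \<noteq> {}"
      using S(2) by blast
    then obtain W where "W \<in> A n" "(+) y ` U n \<subseteq> W"
      using UK[of n] \<open>(+) y ` U n \<inter> K n \<noteq> {}\<close> by meson
    then show "\<exists>W\<in>A n. S \<subseteq> W"
      using y by (meson order_trans)
  qed
  moreover have "pairwise disjnt (B' n)" "\<forall>V\<in>B' n. open V" for n
  proof -
    have "B' n \<subseteq> B n"
      unfolding B'_def by blast
    then show "pairwise disjnt (B' n)" "\<forall>V\<in>B' n. open V"
      using B[of n] pairwise_subset by blast+
  qed
  moreover have "y \<in> \<Union>(\<Union>n. B' n)" for y
  proof -
    have "infinite ({n. y \<in> \<Union>(B n)} - {n. y \<notin> K n})"
      using Diff_infinite_finite[OF K inf] .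
    then have "{n. y \<in> \<Union>(B n)} - {n. y \<notin> K n} \<noteq> {}"
      by (metis finite.emptyI)
    then obtain n where "y \<in> \<Union>(B n)" "y \<in> K n"
      by blast
    then show ?thesis
      unfolding B'_def by blast
  qed
  ultimately show "\<exists>B. (\<forall>n. (\<forall>V\<in>B n. open V) \<and> pairwise disjnt (B n) \<and> refines (B n) (A n))
                   \<and> (\<Union>n. B n) \<in> open_covers"
    unfolding open_covers_def by (intro exI[of _ B']) auto
qed

theorem theorem2p5:
  assumes "hurewicz TYPE('a::topological_group_add)"
  shows "S_c (nbd_covers :: 'a set set set) open_covers \<longleftrightarrow> S_c (open_covers :: 'a set set set) open_covers"
  using S_c_nbd_implies_S_c_open[OF assms] S_c_open_implies_S_c_nbd by blast

end
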